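(* (i) $\mathbf{co}<_{\mathrm{Learn}}\mathbf{nUs}$ and $\mathbf{co}<^{\mathrm{fin}}_{\mathrm{Learn}}\mathbf{nUs}$; (ii) $\mathbf{nUs}<_{\mathrm{Learn}}E_{range}$ and $\mathbf{nUs}\equiv^{\mathrm{fin}}_{\mathrm{Learn}}E_{range}$; (iii) $\mathbf{nUs}<^{\mathrm{fin}}_{\mathrm{Learn}}\mathbf{Ex}$, and in particular $\mathbf{nUs}<_{\mathrm{Learn}}\mathbf{Ex}$.
   Context: All structures are countable, have domain $\mathbb{N}$, are in a finite relational signature, and are identified with their atomic diagrams (elements of $2^{\mathbb{N}}$). A family of structures $\mathfrak{K}$ is a countable set of pairwise nonisomorphic such structures. $\mathcal{S}\restriction_s$ is the finite substructure on $\{0,\dots,s\}$. $\mathrm{LD}(\mathfrak{K})\subseteq2^{\mathbb{N}}$ is the set of structures with domain $\mathbb{N}$ isomorphic to a member of $\mathfrak{K}$ (subspace topology). The hypothesis space is $\{\ulcorner\mathcal{A}\urcorner:\mathcal{A}\in\mathfrak{K}\}\cup\{?\}$; a learner is an arbitrary function from $\{\mathcal{S}\restriction_s:\mathcal{S}\in\mathrm{LD}(\mathfrak{K})\}$ to the hypothesis space. $\mathbf{Ex}$-learnable: some learner $\mathbf{M}$ such that for each $\mathcal{S}\in\mathrm{LD}(\mathfrak{K})$, $\mathbf{M}(\mathcal{S}\restriction_n)$ is eventually constantly $\ulcorner\mathcal{A}\urcorner$ where $\mathcal{A}\cong\mathcal{S}$. $\mathbf{nUs}$-learnable: some learner $\mathbf{Ex}$-learning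 $\mathfrak{K}$ such that, on each $\mathcal{S}\cong\mathcal{A}$, once it first outputs $\ulcorner\mathcal{A}\urcorner$ it outputs $\ulcorner\mathcal{A}\urcorner$ at all later stages. $\mathbf{co}$-learnable: some learner $\mathbf{M}$ such that for each $\mathcal{S}\in\mathrm{LD}(\mathfrak{K})$, $\{\mathbf{M}(\mathcal{S}\restriction_s):s\}\setminus\{?\}=\{\ulcorner\mathcal{B}\urcorner:\mathcal{B}\in\mathfrak{K},\mathcal{B}\neq\mathcal{A}\}$ where $\mathcal{A}\cong\mathcal{S}$. For an equivalence relation $E$ on a space $X$, $\mathfrak{K}$ is $E$-learnable if there is a continuous $\Gamma:\mathrm{LD}(\mathfrak{K})\to X$ with $\mathcal{S}\cong\mathcal{S}'\iff\Gamma(\mathcal{S})E\Gamma(\mathcal{S}')$ on $\mathrm{LD}(\mathfrak{K})$. $E_{range}$ on $\mathbb{N}^{\mathbb{N}}$: $p\,E_{range}\,q\iff\{p(m):m\}=\{q(m):m\}$. For criteria $X,Y$: $X\leq_{\mathrm{Learn}}Y$ iff every $X$-learnable family is $Y$-learnable; $X\leq^{\mathrm{fin}}_{\mathrm{Learn}}Y$ iff every finite $X$-learnable family is $Y$-learnable; $<$ means $\leq$ but not $\geq$; $\equiv$ means both $\leq$ and $\geq$. *)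

theory Defs
  imports "HOL-Analysis.Analysis"
begin

text \<open>A countable structure with domain nat in a finite relational signature.
  A signature is a list of arities; relation symbol i (i < length sig) has arity sig ! i.
  A structure is given by its relations: R i xs holds iff the tuple xs is in the
  i-th relation. This is (up to a recursive recoding) the atomic diagram, and the
  product topology on nat \<Rightarrow> nat list \<Rightarrow> bool (bool discrete) is the
  Cantor-space topology on atomic diagrams.\<close>

type_synonym struc = "nat \<Rightarrow> nat list \<Rightarrow> bool"

definition wf_struc :: "nat list \<Rightarrow> struc \<Rightarrow> bool" where
  "wf_struc sig S \<longleftrightarrow> (\<forall>i xs. S i xs \<longrightarrow> i < length sig \<and> length xs = sig ! i)"

definition iso :: "struc \<Rightarrow> struc \<Rightarrow> bool" where
  "iso S T \<longleftrightarrow> (\<exists>f. bij f \<and> (\<forall>i xs. S i xs \<longleftrightarrow> T i (map f xs)))"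

text \<open>Finite substructure on {0,...,s}; the learner sees the pair (s, S restricted).\<close>
definition restr :: "nat \<Rightarrow> struc \<Rightarrow> nat \<times> struc" where
  "restr s S = (s, (\<lambda>i xs. (\<forall>x\<in>set xs. x \<le> s) \<and> S i xs))"

definition family :: "nat list \<Rightarrow> struc set \<Rightarrow> bool" where
  "family sig K \<longleftrightarrow> countable K \<and> (\<forall>A\<in>K. wf_struc sig A)
      \<and> (\<forall>A\<in>K. \<forall>B\<in>K. iso A B \<longrightarrow> A = B)"

definition LD :: "nat list \<Rightarrow> struc set \<Rightarrow> struc set" where
  "LD sig K = {S. wf_struc sig S \<and> (\<exists>A\<in>K. iso S A)}"

text \<open>Hypotheses: Some A stands for the name of A \<in> K, None for '?'.\<close>
type_synonym learner = "nat \<times> struc \<Rightarrow> struc option"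

definition is_learner :: "nat list \<Rightarrow> struc set \<Rightarrow> learner \<Rightarrow> bool" where
  "is_learner sig K M \<longleftrightarrow> (\<forall>S\<in>LD sig K. \<forall>s. M (restr s S) \<in> Some ` K \<union> {None})"

definition Ex_learns :: "nat list \<Rightarrow> struc set \<Rightarrow> learner \<Rightarrow> bool" where
  "Ex_learns sig K M \<longleftrightarrow> is_learner sig K M \<and>
     (\<forall>S\<in>LD sig K. \<exists>A\<in>K. iso S A \<and> (\<forall>\<^sub>F n in sequentially. M (restr n S) = Some A))"

definition Ex_learnable :: "nat list \<Rightarrow> struc set \<Rightarrow> bool" where
  "Ex_learnable sig K \<longleftrightarrow> (\<exists>M. Ex_learns sig K M)"

definition nUs_learnable :: "nat list \<Rightarrow> struc set \<Rightarrow> bool" where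
  "nUs_learnable sig K \<longleftrightarrow> (\<exists>M. Ex_learns sig K M \<and>
     (\<forall>S\<in>LD sig K. \<forall>A\<in>K. iso S A \<longrightarrow>
        (\<forall>n m. n \<le> m \<longrightarrow> M (restr n S) = Some A \<longrightarrow> M (restr m S) = Some A)))"

definition co_learnable :: "nat list \<Rightarrow> struc set \<Rightarrow> bool" where
  "co_learnable sig K \<longleftrightarrow> (\<exists>M. is_learner sig K M \<and>
     (\<forall>S\<in>LD sig K. \<forall>A\<in>K. iso S A \<longrightarrow>
        range (\<lambda>s. M (restr s S)) - {None} = Some ` (K - {A})))"

definition E_learnable :: "('x::topological_space \<Rightarrow> 'x \<Rightarrow> bool) \<Rightarrow> nat list \<Rightarrow> struc set \<Rightarrow> bool" where
  "E_learnable E sig K \<longleftrightarrow> (\<exists>\<Gamma> :: struc \<Rightarrow> 'x. continuous_on (LD sig K) \<Gamma> \<and>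
     (\<forall>S\<in>LD sig K. \<forall>T\<in>LD sig K. iso S T \<longleftrightarrow> E (\<Gamma> S) (\<Gamma> T)))"

definition E_range :: "(nat \<Rightarrow> nat) \<Rightarrow> (nat \<Rightarrow> nat) \<Rightarrow> bool" where
  "E_range p q \<longleftrightarrow> range p = range q"

definition Erange_learnable :: "nat list \<Rightarrow> struc set \<Rightarrow> bool" where
  "Erange_learnable = E_learnable E_range"

type_synonym criterion = "nat list \<Rightarrow> struc set \<Rightarrow> bool"

definition learn_le :: "criterion \<Rightarrow> criterion \<Rightarrow> bool" where
  "learn_le X Y \<longleftrightarrow> (\<forall>sig K. family sig K \<longrightarrow> X sig K \<longrightarrow> Y sig K)"

definition learn_le_fin :: "criterion \<Rightarrow> criterion \<Rightarrow> bool" where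
  "learn_le_fin X Y \<longleftrightarrow> (\<forall>sig K. family sig K \<longrightarrow> finite K \<longrightarrow> X sig K \<longrightarrow> Y sig K)"

definition learn_lt :: "criterion \<Rightarrow> criterion \<Rightarrow> bool" where
  "learn_lt X Y \<longleftrightarrow> learn_le X Y \<and> \<not> learn_le Y X"

definition learn_lt_fin :: "criterion \<Rightarrow> criterion \<Rightarrow> bool" where
  "learn_lt_fin X Y \<longleftrightarrow> learn_le_fin X Y \<and> \<not> learn_le_fin Y X"

definition learn_eq_fin :: "criterion \<Rightarrow> criterion \<Rightarrow> bool" where
  "learn_eq_fin X Y \<longleftrightarrow> learn_le_fin X Y \<and> learn_le_fin Y X"

end

theory Submission
  imports Defs
begin

text \<open>A co-learner never names the right structure and eventually names every other one, so
  guessing the first member of K, in a fixed enumeration, that it has not named yet is learning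
  without U-shapes. A non-U-shaped learner cannot cope with two members each of which agrees, on
  every finite part, with a copy of the other; hence two structures in LD(K) are isomorphic iff
  they exclude, through some finite part, the same members of K, and enumerating the codes of the
  excluded members is a reduction to E_range. For finite K, finitely many values separate the
  ranges of such a reduction, and naming a member as soon as these values are determined is
  non-U-shaped. The separating examples are the empty and a one-point unary predicate (the empty
  one agrees on every finite part with a one-point one, which defeats co-learning), unary
  predicates of every size with infinite complement (counting gives an E_range reduction, while a
  diagonal argument defeats every Ex-learner), and the orders omega and omega_star (Ex-learnable,
  but each agrees on every finite part with a copy of the other).\<close>

section \<open>Isomorphism, restrictions and the learning criteria\<close>

lemma fst_restr [simp]: "fst (restr s S) = s"
  by (simp add: restr_def)

lemma restr_restr: "n \<le> m \<Longrightarrow> restr n (snd (restr m S)) = restr n S"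
  unfolding restr_def by (auto intro!: ext)

lemma restr_eq_le: "n \<le> m \<Longrightarrow> restr m S = restr m T \<Longrightarrow> restr n S = restr n T"
  by (metis restr_restr)

lemma restr_eqD:
  assumes "restr k S = restr k T" "\<forall>x\<in>set xs. x \<le> k"
  shows "S i xs = T i xs"
proof -
  have "snd (restr k S) i xs = snd (restr k T) i xs" using assms(1) by simp
  then show ?thesis using assms(2) by (simp add: restr_def)
qed

lemma restr_eqI: "(\<And>i xs. \<forall>x\<in>set xs. x \<le> k \<Longrightarrow> S i xs = T i xs) \<Longrightarrow> restr k S = restr k T"
  unfolding restr_def by (auto intro!: ext)

definition pullback :: "(nat \<Rightarrow> nat) \<Rightarrow> struc \<Rightarrow> struc" where
  "pullback f T = (\<lambda>i xs. T i (map f xs))"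

lemma pullback_comp: "pullback f (pullback g T) = pullback (g \<circ> f) T"
  unfolding pullback_def by simp

lemma pullback_id: "pullback id T = T"
  unfolding pullback_def by simp

lemma iso_iff_pullback: "iso S T \<longleftrightarrow> (\<exists>f. bij f \<and> S = pullback f T)"
  unfolding iso_def pullback_def by (auto simp: fun_eq_iff)

lemma iso_pullback: "bij f \<Longrightarrow> iso (pullback f T) T"
  unfolding iso_iff_pullback by blast

lemma iso_refl: "iso S S"
  using iso_pullback[of id S] by (simp add: pullback_id)

lemma iso_sym: assumes "iso S T" shows "iso T S"
proof -
  obtain f where f: "bij f" "S = pullback f T" using assms unfolding iso_iff_pullback by blast
  have "f \<circ> inv f = id" using bij_is_surj[OF f(1)] by (simp add: surj_iff)
  then have "T = pullback (inv f) S" using f(2) by (simp add: pullback_comp pullback_id)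
  with iso_pullback[OF bij_imp_bij_inv[OF f(1)], of S] show ?thesis by simp
qed

lemma iso_trans: assumes "iso S T" "iso T U" shows "iso S U"
proof -
  obtain f g where fg: "bij f" "S = pullback f T" "bij g" "T = pullback g U"
    using assms unfolding iso_iff_pullback by blast
  then have "S = pullback (g \<circ> f) U" by (simp add: pullback_comp)
  with iso_pullback[OF bij_comp[OF fg(1,3)]] show ?thesis by simp
qed

lemma wf_struc_pullback: "wf_struc sig T \<Longrightarrow> wf_struc sig (pullback f T)"
  unfolding wf_struc_def pullback_def by (metis length_map)

lemma wf_struc_iso: "iso S T \<Longrightarrow> wf_struc sig T \<Longrightarrow> wf_struc sig S"
  unfolding iso_iff_pullback using wf_struc_pullback by blast

lemma family_in_LD: "family sig K \<Longrightarrow> A \<in> K \<Longrightarrow> A \<in> LD sig K"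
  unfolding family_def LD_def by (auto intro!: bexI[of _ A] iso_refl)

lemma iso_in_LD: "family sig K \<Longrightarrow> A \<in> K \<Longrightarrow> iso S A \<Longrightarrow> S \<in> LD sig K"
  unfolding family_def LD_def by (auto intro!: bexI[of _ A] wf_struc_iso[of S A])

lemma family_iso_unique:
  "family sig K \<Longrightarrow> A \<in> K \<Longrightarrow> B \<in> K \<Longrightarrow> iso S A \<Longrightarrow> iso S B \<Longrightarrow> A = B"
  unfolding family_def using iso_sym iso_trans by blast

lemma Ex_learnsD:
  assumes "Ex_learns sig K M" "family sig K" "A \<in> K" "iso S A"
  shows "\<forall>\<^sub>F n in sequentially. M (restr n S) = Some A"
proof -
  obtain B where B: "B \<in> K" "iso S B" "\<forall>\<^sub>F n in sequentially. M (restr n S) = Some B"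
    using assms(1) iso_in_LD[OF assms(2-4)] unfolding Ex_learns_def by blast
  have "B = A" by (rule family_iso_unique[OF assms(2) B(1) assms(3) B(2) assms(4)])
  with B(3) show ?thesis by simp
qed

definition nonU_shaped :: "nat list \<Rightarrow> struc set \<Rightarrow> learner \<Rightarrow> bool" where
  "nonU_shaped sig K M \<longleftrightarrow> (\<forall>S\<in>LD sig K. \<forall>A\<in>K. iso S A \<longrightarrow>
     (\<forall>n m. n \<le> m \<longrightarrow> M (restr n S) = Some A \<longrightarrow> M (restr m S) = Some A))"

lemma nonU_shapedD:
  "nonU_shaped sig K M \<Longrightarrow> S \<in> LD sig K \<Longrightarrow> A \<in> K \<Longrightarrow> iso S A \<Longrightarrow> n \<le> m \<Longrightarrow>
    M (restr n S) = Some A \<Longrightarrow> M (restr m S) = Some A"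
  unfolding nonU_shaped_def by blast

lemma nUs_learnable_iff: "nUs_learnable sig K \<longleftrightarrow> (\<exists>M. Ex_learns sig K M \<and> nonU_shaped sig K M)"
  unfolding nUs_learnable_def nonU_shaped_def ..

lemma nUs_imp_Ex: "nUs_learnable sig K \<Longrightarrow> Ex_learnable sig K"
  unfolding nUs_learnable_iff Ex_learnable_def by blast

definition reduces_to_range :: "nat list \<Rightarrow> struc set \<Rightarrow> (struc \<Rightarrow> nat \<Rightarrow> nat) \<Rightarrow> bool" where
  "reduces_to_range sig K \<Gamma> \<longleftrightarrow> continuous_on (LD sig K) \<Gamma> \<and>
     (\<forall>S\<in>LD sig K. \<forall>T\<in>LD sig K. iso S T \<longleftrightarrow> range (\<Gamma> S) = range (\<Gamma> T))"

lemma Erange_learnable_iff: "Erange_learnable sig K \<longleftrightarrow> (\<exists>\<Gamma>. reduces_to_range sig K \<Gamma>)"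
  unfolding Erange_learnable_def E_learnable_def E_range_def reduces_to_range_def ..

section \<open>Cylinders in the space of structures\<close>

lemma open_fun_contains_basic_nbhd:
  fixes U :: "('a \<Rightarrow> 'b::topological_space) set"
  assumes "open U" "g \<in> U"
  shows "\<exists>F V. finite F \<and> (\<forall>a\<in>F. open (V a) \<and> g a \<in> V a) \<and>
    (\<forall>h. (\<forall>a\<in>F. h a \<in> V a) \<longrightarrow> h \<in> U)"
proof -
  from assms have "openin (product_topology (\<lambda>i. euclidean) UNIV) U" by (simp add: open_fun_def)
  from product_topology_open_contains_basis[OF this assms(2)] obtain X where
    X: "g \<in> Pi\<^sub>E UNIV X" "\<forall>i. openin euclidean (X i)" "finite {i. X i \<noteq> topspace euclidean}"
      "Pi\<^sub>E UNIV X \<subseteq> U" by blast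
  have "finite {i. X i \<noteq> UNIV}" using X(3) by simp
  moreover have "\<forall>a\<in>{i. X i \<noteq> UNIV}. open (X a) \<and> g a \<in> X a"
    using X(1,2) by (auto simp: PiE_iff)
  moreover have "\<forall>h. (\<forall>a\<in>{i. X i \<noteq> UNIV}. h a \<in> X a) \<longrightarrow> h \<in> U"
  proof (intro allI impI)
    fix h assume "\<forall>a\<in>{i. X i \<noteq> UNIV}. h a \<in> X a"
    then have "h \<in> Pi\<^sub>E UNIV X" unfolding PiE_iff by auto
    then show "h \<in> U" using X(4) by blast
  qed
  ultimately show ?thesis by blast
qed

lemma open_fun_contains_cylinder:
  fixes U :: "('a \<Rightarrow> 'b::discrete_topology) set"
  assumes "open U" "g \<in> U"
  shows "\<exists>F. finite F \<and> (\<forall>h. (\<forall>a\<in>F. h a = g a) \<longrightarrow> h \<in> U)"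
proof -
  obtain F V where "finite F" "\<forall>a\<in>F. open (V a) \<and> g a \<in> V a"
    "\<forall>h. (\<forall>a\<in>F. h a \<in> V a) \<longrightarrow> h \<in> U"
    using open_fun_contains_basic_nbhd[OF assms] by blast
  then show ?thesis by (metis (no_types, lifting))
qed

lemma open_struc_contains_cylinder:
  fixes U :: "struc set"
  assumes "open U" "S \<in> U"
  shows "\<exists>k. \<forall>T. restr k T = restr k S \<longrightarrow> T \<in> U"
proof -
  obtain F V where F: "finite F" "\<forall>a\<in>F. open (V a) \<and> S a \<in> V a"
    "\<forall>h. (\<forall>a\<in>F. h a \<in> V a) \<longrightarrow> h \<in> U"
    using open_fun_contains_basic_nbhd[OF assms] by blast
  have "\<forall>a\<in>F. \<exists>G. finite G \<and> (\<forall>h. (\<forall>b\<in>G. h b = S a b) \<longrightarrow> h \<in> V a)"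
    using F(2) open_fun_contains_cylinder by blast
  then obtain G
    where G: "\<forall>a\<in>F. finite (G a) \<and> (\<forall>h. (\<forall>b\<in>G a. h b = S a b) \<longrightarrow> h \<in> V a)"
    by metis
  define E where "E = (\<Union>a\<in>F. \<Union>xs\<in>G a. set xs)"
  have "finite E" unfolding E_def using F(1) G by auto
  define k where "k = Max (insert 0 E)"
  have k: "x \<in> E \<Longrightarrow> x \<le> k" for x unfolding k_def using \<open>finite E\<close> by simp
  show ?thesis
  proof (intro exI allI impI)
    fix T assume T: "restr k T = restr k S"
    have "T a \<in> V a" if a: "a \<in> F" for a
    proof -
      have "T a xs = S a xs" if "xs \<in> G a" for xs
        using restr_eqD[OF T] k a that unfolding E_def by blast
      then show ?thesis using G a by blast
    qed
    then show "T \<in> U" using F(3) by blast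
  qed
qed

lemma continuous_on_struc_locally_determined:
  fixes \<Gamma> :: "struc \<Rightarrow> nat \<Rightarrow> 'c::discrete_topology"
  assumes "continuous_on X \<Gamma>" "S \<in> X"
  shows "\<exists>k. \<forall>T\<in>X. restr k T = restr k S \<longrightarrow> \<Gamma> T m = \<Gamma> S m"
proof -
  have "continuous_on X (\<lambda>T. \<Gamma> T m)"
    using continuous_on_product_then_coordinatewise[OF assms(1)] .
  then have "\<forall>B. open B \<longrightarrow> (\<exists>A. open A \<and> A \<inter> X = (\<lambda>T. \<Gamma> T m) -` B \<inter> X)"
    by (simp only: continuous_on_open_invariant)
  moreover have "open {\<Gamma> S m}" by (rule open_discrete)
  ultimately obtain A where A: "open A" "A \<inter> X = (\<lambda>T. \<Gamma> T m) -` {\<Gamma> S m} \<inter> X"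
    by blast
  have "S \<in> A" using A(2) assms(2) by blast
  then obtain k where "\<forall>T. restr k T = restr k S \<longrightarrow> T \<in> A"
    using open_struc_contains_cylinder A(1) by blast
  then show ?thesis using A(2) by blast
qed

lemma open_struc_atomic: "open {T::struc. T i xs = b}"
proof -
  have i: "continuous_on UNIV (\<lambda>T::struc. T i)" by simp
  have xs: "continuous_on UNIV (\<lambda>g::nat list \<Rightarrow> bool. g xs)" by simp
  have "continuous_on UNIV (\<lambda>T::struc. T i xs)"
    using continuous_on_compose2[OF xs i] by simp
  then have "\<forall>B. open B \<longrightarrow> open ((\<lambda>T::struc. T i xs) -` B)"
    using continuous_on_open_vimage[OF open_UNIV, of "\<lambda>T::struc. T i xs"] by simp
  then have "open ((\<lambda>T::struc. T i xs) -` {b})" by (simp add: open_discrete)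
  then show ?thesis by (simp add: vimage_def)
qed

definition atoms_upto :: "nat list \<Rightarrow> nat \<Rightarrow> (nat \<times> nat list) set" where
  "atoms_upto sig k = {(i, xs). i < length sig \<and> length xs = sig ! i \<and> set xs \<subseteq> {..k}}"

lemma finite_atoms_upto: "finite (atoms_upto sig k)"
proof -
  have "atoms_upto sig k \<subseteq> (SIGMA i:{..<length sig}. {xs. set xs \<subseteq> {..k} \<and> length xs = sig ! i})"
    unfolding atoms_upto_def by auto
  moreover have "finite (SIGMA i:{..<length sig}. {xs. set xs \<subseteq> {..k} \<and> length xs = sig ! i})"
    by (intro finite_SigmaI finite_lists_length_eq) auto
  ultimately show ?thesis by (rule finite_subset)
qed

lemma restr_eq_if_atoms_upto:
  assumes "wf_struc sig S" "wf_struc sig T" "\<forall>(i, xs)\<in>atoms_upto sig k. T i xs = S i xs"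
  shows "restr k T = restr k S"
proof (rule restr_eqI)
  fix i xs assume xs: "\<forall>x\<in>set xs. x \<le> k"
  show "T i xs = S i xs"
  proof (cases "(i, xs) \<in> atoms_upto sig k")
    case True then show ?thesis using assms(3) by blast
  next
    case False
    with xs have "\<not> (i < length sig \<and> length xs = sig ! i)" unfolding atoms_upto_def by auto
    with assms(1,2) show ?thesis unfolding wf_struc_def by blast
  qed
qed

lemma continuous_on_restr:
  fixes G :: "nat \<times> struc \<Rightarrow> 'b::topological_space"
  assumes "X \<subseteq> {S. wf_struc sig S}"
  shows "continuous_on X (\<lambda>S. G (restr k S))"
  unfolding continuous_on_open_invariant
proof (intro allI impI)
  fix B :: "'b set"
  define C where "C S = (\<Inter>(i, xs)\<in>atoms_upto sig k. {T::struc. T i xs = S i xs})" for S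
  define A where "A = (\<Union>S\<in>{S\<in>X. G (restr k S) \<in> B}. C S)"
  have "open (C S)" for S
    unfolding C_def by (intro open_INT finite_atoms_upto ballI) (clarsimp simp: open_struc_atomic)
  then have "open A" unfolding A_def by (auto intro: open_UN)
  moreover have "A \<inter> X = (\<lambda>S. G (restr k S)) -` B \<inter> X"
  proof
    show "A \<inter> X \<subseteq> (\<lambda>S. G (restr k S)) -` B \<inter> X"
    proof
      fix T assume T: "T \<in> A \<inter> X"
      then obtain S where S: "S \<in> X" "G (restr k S) \<in> B" "T \<in> C S" unfolding A_def by blast
      have "\<forall>(i, xs)\<in>atoms_upto sig k. T i xs = S i xs" using S(3) unfolding C_def by blast
      moreover have "wf_struc sig S" "wf_struc sig T" using S(1) T assms by auto
      ultimately have "restr k T = restr k S" by (intro restr_eq_if_atoms_upto)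
      with S(2) T show "T \<in> (\<lambda>S. G (restr k S)) -` B \<inter> X" by simp
    qed
    show "(\<lambda>S. G (restr k S)) -` B \<inter> X \<subseteq> A \<inter> X"
    proof
      fix T assume "T \<in> (\<lambda>S. G (restr k S)) -` B \<inter> X"
      moreover have "T \<in> C T" unfolding C_def by blast
      ultimately show "T \<in> A \<inter> X" unfolding A_def by blast
    qed
  qed
  ultimately show "\<exists>A. open A \<and> A \<inter> X = (\<lambda>S. G (restr k S)) -` B \<inter> X" by blast
qed

section \<open>Co-learning implies non-U-shaped learning\<close>

definition co_learns :: "nat list \<Rightarrow> struc set \<Rightarrow> learner \<Rightarrow> bool" where
  "co_learns sig K M \<longleftrightarrow> is_learner sig K M \<and> (\<forall>S\<in>LD sig K. \<forall>A\<in>K. iso S A \<longrightarrow>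
     range (\<lambda>s. M (restr s S)) - {None} = Some ` (K - {A}))"

lemma co_learnable_iff: "co_learnable sig K \<longleftrightarrow> (\<exists>M. co_learns sig K M)"
  unfolding co_learnable_def co_learns_def ..

definition named_by :: "learner \<Rightarrow> struc set \<Rightarrow> nat \<times> struc \<Rightarrow> struc set" where
  "named_by M K p = {B\<in>K. \<exists>t\<le>fst p. M (restr t (snd p)) = Some B}"

lemma named_by_restr: "named_by M K (restr s S) = {B\<in>K. \<exists>t\<le>s. M (restr t S) = Some B}"
  unfolding named_by_def by (auto simp: restr_restr)

lemma named_by_mono: "n \<le> m \<Longrightarrow> named_by M K (restr n S) \<subseteq> named_by M K (restr m S)"
  unfolding named_by_restr using le_trans by blast

lemma co_learns_never_names:
  assumes "co_learns sig K M" "S \<in> LD sig K" "A \<in> K" "iso S A"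
  shows "A \<notin> named_by M K (restr s S)"
proof
  assume "A \<in> named_by M K (restr s S)"
  then obtain t where "M (restr t S) = Some A" unfolding named_by_restr by blast
  then have "Some A \<in> range (\<lambda>s. M (restr s S)) - {None}"
    by (metis DiffI rangeI singletonD option.simps(3))
  with assms show False unfolding co_learns_def by auto
qed

lemma co_learns_eventually_names:
  assumes "co_learns sig K M" "S \<in> LD sig K" "A \<in> K" "iso S A" "B \<in> K" "B \<noteq> A"
  shows "\<forall>\<^sub>F s in sequentially. B \<in> named_by M K (restr s S)"
proof -
  have "Some B \<in> range (\<lambda>s. M (restr s S))"
    using assms unfolding co_learns_def by blast
  then obtain t where "M (restr t S) = Some B" by auto
  with assms(5) show ?thesis
    unfolding named_by_restr eventually_sequentially by blast
qed

definition least_unnamed :: "learner \<Rightarrow> struc set \<Rightarrow> learner" where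
  "least_unnamed M K p = (if K - named_by M K p = {} then None
     else Some (arg_min (to_nat_on K) (\<lambda>B. B \<in> K - named_by M K p)))"

lemma least_unnamed_eq_Some:
  assumes "countable K"
  shows "least_unnamed M K p = Some A \<longleftrightarrow>
    A \<in> K - named_by M K p \<and> (\<forall>B\<in>K - named_by M K p. to_nat_on K A \<le> to_nat_on K B)"
    (is "_ \<longleftrightarrow> A \<in> ?U \<and> _")
proof
  assume "least_unnamed M K p = Some A"
  then have "?U \<noteq> {}" "A = arg_min (to_nat_on K) (\<lambda>B. B \<in> ?U)"
    unfolding least_unnamed_def by (auto split: if_splits)
  then show "A \<in> ?U \<and> (\<forall>B\<in>?U. to_nat_on K A \<le> to_nat_on K B)"
    using arg_min_nat_lemma[of "\<lambda>B. B \<in> ?U"] by blast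
next
  assume A: "A \<in> ?U \<and> (\<forall>B\<in>?U. to_nat_on K A \<le> to_nat_on K B)"
  define A' where "A' = arg_min (to_nat_on K) (\<lambda>B. B \<in> ?U)"
  have "A' \<in> ?U" "to_nat_on K A' \<le> to_nat_on K A"
    using A arg_min_nat_lemma[of "\<lambda>B. B \<in> ?U"] unfolding A'_def by blast+
  with A have "to_nat_on K A' = to_nat_on K A" by (meson antisym)
  with \<open>A' \<in> ?U\<close> A have "A' = A"
    using inj_on_to_nat_on[OF assms] by (meson DiffD1 inj_onD)
  with A show "least_unnamed M K p = Some A"
    unfolding least_unnamed_def A'_def by auto
qed

lemma is_learner_least_unnamed: "is_learner sig K (least_unnamed M K)"
  unfolding is_learner_def least_unnamed_def using arg_min_natI[of "\<lambda>B. B \<in> K - _"] by auto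

lemma finite_to_nat_on_less: "countable K \<Longrightarrow> finite {B\<in>K. to_nat_on K B < n}"
  by (rule finite_imageD[of "to_nat_on K"])
    (auto intro: finite_subset[of _ "{..<n}"] inj_on_subset[OF inj_on_to_nat_on])

lemma Ex_learns_least_unnamed:
  assumes fam: "family sig K" and co: "co_learns sig K M"
  shows "Ex_learns sig K (least_unnamed M K)"
  unfolding Ex_learns_def
proof (intro conjI is_learner_least_unnamed ballI)
  fix S assume S: "S \<in> LD sig K"
  then obtain A where A: "A \<in> K" "iso S A" unfolding LD_def by blast
  have K: "countable K" using fam unfolding family_def by simp
  let ?below = "{B\<in>K. to_nat_on K B < to_nat_on K A}"
  have "\<forall>B\<in>?below. \<forall>\<^sub>F s in sequentially. B \<in> named_by M K (restr s S)"
    using co_learns_eventually_names[OF co S A] by auto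
  then have "\<forall>\<^sub>F s in sequentially. ?below \<subseteq> named_by M K (restr s S)"
    using eventually_ball_finite[OF finite_to_nat_on_less[OF K]] by (simp add: subset_eq)
  then have "\<forall>\<^sub>F s in sequentially. least_unnamed M K (restr s S) = Some A"
  proof (rule eventually_mono)
    fix s assume "?below \<subseteq> named_by M K (restr s S)"
    with co_learns_never_names[OF co S A] A(1) show "least_unnamed M K (restr s S) = Some A"
      unfolding least_unnamed_eq_Some[OF K] by (auto simp: not_less)
  qed
  with A show "\<exists>A\<in>K. iso S A \<and> (\<forall>\<^sub>F n in sequentially. least_unnamed M K (restr n S) = Some A)"
    by blast
qed

lemma nonU_shaped_least_unnamed:
  assumes fam: "family sig K" and co: "co_learns sig K M"
  shows "nonU_shaped sig K (least_unnamed M K)"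
  unfolding nonU_shaped_def
proof (intro ballI impI allI)
  fix S A n m
  assume S: "S \<in> LD sig K" and A: "A \<in> K" "iso S A" and "n \<le> m"
    and "least_unnamed M K (restr n S) = Some A"
  moreover have K: "countable K" using fam unfolding family_def by simp
  ultimately have "\<forall>B\<in>K - named_by M K (restr m S). to_nat_on K A \<le> to_nat_on K B"
    using named_by_mono[of n m M K S] unfolding least_unnamed_eq_Some[OF K] by blast
  with co_learns_never_names[OF co S A] A(1) show "least_unnamed M K (restr m S) = Some A"
    unfolding least_unnamed_eq_Some[OF K] by blast
qed

lemma co_imp_nUs: "family sig K \<Longrightarrow> co_learnable sig K \<Longrightarrow> nUs_learnable sig K"
  unfolding co_learnable_iff nUs_learnable_iff
  using Ex_learns_least_unnamed nonU_shaped_least_unnamed by blast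

section \<open>Non-U-shaped learning implies E_range-learning\<close>

definition piece_excludes :: "nat \<times> struc \<Rightarrow> struc \<Rightarrow> bool" where
  "piece_excludes p B \<longleftrightarrow> (\<forall>T. iso T B \<longrightarrow> restr (fst p) T \<noteq> p)"

definition excludes :: "struc \<Rightarrow> struc \<Rightarrow> bool" where
  "excludes S B \<longleftrightarrow> (\<exists>k. piece_excludes (restr k S) B)"

lemma not_excludes_iff: "\<not> excludes S B \<longleftrightarrow> (\<forall>k. \<exists>T. iso T B \<and> restr k T = restr k S)"
  unfolding excludes_def piece_excludes_def by auto

lemma not_excludes_self: "iso S B \<Longrightarrow> \<not> excludes S B"
  unfolding not_excludes_iff by blast

lemma restr_pullback:
  assumes "f ` {..k} \<subseteq> {..k'}" "restr k' T = restr k' T'"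
  shows "restr k (pullback f T) = restr k (pullback f T')"
proof (rule restr_eqI)
  fix i xs assume "\<forall>x\<in>set xs. x \<le> k"
  then have "\<forall>y\<in>set (map f xs). y \<le> k'" using assms(1) by auto
  then show "pullback f T i xs = pullback f T' i xs"
    unfolding pullback_def using restr_eqD[OF assms(2)] by blast
qed

lemma excludes_iso:
  assumes "iso S T" "excludes S B"
  shows "excludes T B"
proof -
  obtain k where k: "piece_excludes (restr k S) B" using assms(2) unfolding excludes_def by blast
  obtain f where f: "bij f" "S = pullback f T" using assms(1) unfolding iso_iff_pullback by blast
  define k' where "k' = Max (f ` {..k})"
  have fk: "f ` {..k} \<subseteq> {..k'}" unfolding k'_def by (auto intro: Max_ge)
  have "piece_excludes (restr k' T) B" unfolding piece_excludes_def
  proof (intro allI impI notI)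
    fix T' assume T': "iso T' B" "restr (fst (restr k' T)) T' = restr k' T"
    have "iso (pullback f T') B" using iso_trans[OF iso_pullback[OF f(1)] T'(1)] .
    have "restr k' T' = restr k' T" using T'(2) by simp
    then have "restr k (pullback f T') = restr k S"
      unfolding f(2) by (rule restr_pullback[OF fk])
    moreover note \<open>iso (pullback f T') B\<close>
    ultimately show False using k unfolding piece_excludes_def by simp
  qed
  then show ?thesis unfolding excludes_def by blast
qed

lemma excludes_iso_iff: "iso S T \<Longrightarrow> excludes S B \<longleftrightarrow> excludes T B"
  using excludes_iso iso_sym[of S T] by metis

text \<open>If neither of A and B excludes the other, a learner that has settled on A can be led,
  by a copy of B that agrees with A up to that point, to switch to B, and then back to A by
  a copy of A agreeing with that copy of B long enough: a U-shape.\<close>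

lemma nonU_shaped_excludes:
  assumes fam: "family sig K" and Ex: "Ex_learns sig K M" and nonU: "nonU_shaped sig K M"
    and A: "A \<in> K" and B: "B \<in> K" and "A \<noteq> B"
  shows "excludes A B \<or> excludes B A"
proof (rule ccontr)
  assume "\<not> (excludes A B \<or> excludes B A)"
  then have AB: "\<not> excludes A B" and BA: "\<not> excludes B A" by auto
  obtain n where n: "M (restr n A) = Some A"
    using Ex_learnsD[OF Ex fam A iso_refl] unfolding eventually_sequentially by blast
  obtain T where T: "iso T B" "restr n T = restr n A"
    using AB unfolding not_excludes_iff by blast
  obtain N where N: "\<And>m. N \<le> m \<Longrightarrow> M (restr m T) = Some B"
    using Ex_learnsD[OF Ex fam B T(1)] unfolding eventually_sequentially by blast
  define m where "m = max N n"
  have m: "n \<le> m" "M (restr m T) = Some B" using N unfolding m_def by auto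
  have "\<not> excludes T A" using BA excludes_iso_iff[OF T(1)] by simp
  then obtain S where S: "iso S A" "restr m S = restr m T"
    unfolding not_excludes_iff by blast
  have "M (restr n S) = Some A"
    using restr_eq_le[OF m(1) S(2)] T(2) n by simp
  then have "M (restr m S) = Some A"
    using nonU_shapedD[OF nonU iso_in_LD[OF fam A S(1)] A S(1) m(1)] by blast
  with S(2) m(2) \<open>A \<noteq> B\<close> show False by simp
qed

lemma nUs_iso_iff_same_exclusions:
  assumes fam: "family sig K" and nUs: "nUs_learnable sig K"
    and S: "S \<in> LD sig K" and T: "T \<in> LD sig K"
  shows "iso S T \<longleftrightarrow> (\<forall>B\<in>K. excludes S B \<longleftrightarrow> excludes T B)"
proof
  assume "iso S T" then show "\<forall>B\<in>K. excludes S B \<longleftrightarrow> excludes T B"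
    using excludes_iso_iff by blast
next
  assume same: "\<forall>B\<in>K. excludes S B \<longleftrightarrow> excludes T B"
  obtain A where A: "A \<in> K" "iso S A" using S unfolding LD_def by blast
  obtain A' where A': "A' \<in> K" "iso T A'" using T unfolding LD_def by blast
  have "A = A'"
  proof (rule ccontr)
    assume "A \<noteq> A'"
    have "\<not> excludes A A'"
      using same A'(1) not_excludes_self[OF A'(2)] excludes_iso_iff[OF A(2)] by blast
    moreover have "\<not> excludes A' A"
      using same A(1) not_excludes_self[OF A(2)] excludes_iso_iff[OF A'(2)] by blast
    moreover obtain M where "Ex_learns sig K M" "nonU_shaped sig K M"
      using nUs unfolding nUs_learnable_iff by blast
    ultimately show False
      using nonU_shaped_excludes[OF fam _ _ A(1) A'(1) \<open>A \<noteq> A'\<close>] by blast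
  qed
  then show "iso S T" using A A' iso_sym iso_trans by blast
qed

text \<open>Coordinate n = Suc (prod_encode (j, k)) of the enumeration tests whether the
  restriction of S to k excludes the member of K with index j.\<close>

definition exclusion_code :: "struc set \<Rightarrow> nat \<Rightarrow> nat \<times> struc \<Rightarrow> nat" where
  "exclusion_code K j p =
    (if j \<in> to_nat_on K ` K \<and> piece_excludes p (from_nat_into K j) then Suc j else 0)"

definition exclusion_enum :: "struc set \<Rightarrow> struc \<Rightarrow> nat \<Rightarrow> nat" where
  "exclusion_enum K S n = (case n of 0 \<Rightarrow> 0
     | Suc m \<Rightarrow> exclusion_code K (fst (prod_decode m)) (restr (snd (prod_decode m)) S))"

lemma exclusion_enum_Suc_prod_encode:
  "exclusion_enum K S (Suc (prod_encode (j, k))) = exclusion_code K j (restr k S)"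
  unfolding exclusion_enum_def by simp

lemma range_exclusion_enum:
  assumes K: "countable K"
  shows "range (exclusion_enum K S) = insert 0 ((\<lambda>B. Suc (to_nat_on K B)) ` {B\<in>K. excludes S B})"
proof (intro equalityI subsetI)
  fix x assume "x \<in> range (exclusion_enum K S)"
  then obtain n where x: "x = exclusion_enum K S n" by blast
  show "x \<in> insert 0 ((\<lambda>B. Suc (to_nat_on K B)) ` {B\<in>K. excludes S B})"
  proof (cases n)
    case (Suc m)
    define j k where "j = fst (prod_decode m)" and "k = snd (prod_decode m)"
    have x: "x = exclusion_code K j (restr k S)"
      unfolding x Suc exclusion_enum_def j_def k_def by simp
    show ?thesis
    proof (cases "x = 0")
      case False
      then have "j \<in> to_nat_on K ` K" "piece_excludes (restr k S) (from_nat_into K j)" "x = Suc j"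
        unfolding x exclusion_code_def by (simp_all split: if_splits)
      with K obtain B where "B \<in> K" "piece_excludes (restr k S) B" "x = Suc (to_nat_on K B)"
        by auto
      then show ?thesis unfolding excludes_def by blast
    qed simp
  qed (simp add: x exclusion_enum_def)
next
  fix x assume "x \<in> insert 0 ((\<lambda>B. Suc (to_nat_on K B)) ` {B\<in>K. excludes S B})"
  then consider "x = 0" | B k where "B \<in> K" "piece_excludes (restr k S) B" "x = Suc (to_nat_on K B)"
    unfolding excludes_def by blast
  then show "x \<in> range (exclusion_enum K S)"
  proof cases
    case 1
    then have "exclusion_enum K S 0 = x" unfolding exclusion_enum_def by simp
    then show ?thesis by (rule range_eqI[OF sym])
  next
    case 2
    with K have "exclusion_enum K S (Suc (prod_encode (to_nat_on K B, k))) = x"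
      unfolding exclusion_enum_Suc_prod_encode exclusion_code_def by simp
    then show ?thesis by (rule range_eqI[OF sym])
  qed
qed

lemma continuous_on_exclusion_enum:
  "X \<subseteq> {S. wf_struc sig S} \<Longrightarrow> continuous_on X (exclusion_enum K)"
proof (rule continuous_on_coordinatewise_then_product)
  fix n assume X: "X \<subseteq> {S. wf_struc sig S}"
  show "continuous_on X (\<lambda>S. exclusion_enum K S n)"
  proof (cases n)
    case (Suc m)
    show ?thesis unfolding exclusion_enum_def Suc
      using continuous_on_restr[OF X] by simp
  qed (simp add: exclusion_enum_def)
qed

lemma nUs_imp_Erange:
  assumes fam: "family sig K" and nUs: "nUs_learnable sig K"
  shows "Erange_learnable sig K"
proof -
  have K: "countable K" using fam unfolding family_def by simp
  have inj: "inj_on (\<lambda>B. Suc (to_nat_on K B)) K"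
    using inj_on_to_nat_on[OF K] by (simp add: inj_on_def)
  have same_range: "range (exclusion_enum K S) = range (exclusion_enum K T) \<longleftrightarrow>
      (\<forall>B\<in>K. excludes S B \<longleftrightarrow> excludes T B)" for S T
  proof -
    have "range (exclusion_enum K S) = range (exclusion_enum K T) \<longleftrightarrow>
        {B\<in>K. excludes S B} = {B\<in>K. excludes T B}"
      unfolding range_exclusion_enum[OF K]
      by (subst insert_ident) (auto simp: inj_on_image_eq_iff[OF inj])
    also have "\<dots> \<longleftrightarrow> (\<forall>B\<in>K. excludes S B \<longleftrightarrow> excludes T B)"
      by (auto simp: set_eq_iff)
    finally show ?thesis .
  qed
  have "continuous_on (LD sig K) (exclusion_enum K)"
    by (rule continuous_on_exclusion_enum) (auto simp: LD_def)
  moreover have "\<forall>S\<in>LD sig K. \<forall>T\<in>LD sig K.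
      iso S T \<longleftrightarrow> range (exclusion_enum K S) = range (exclusion_enum K T)"
    unfolding same_range using nUs_iso_iff_same_exclusions[OF fam nUs] by simp
  ultimately show ?thesis
    unfolding Erange_learnable_iff reduces_to_range_def by blast
qed

section \<open>E_range-learning implies non-U-shaped learning for finite families\<close>

definition determined_values ::
  "struc set \<Rightarrow> (struc \<Rightarrow> nat \<Rightarrow> nat) \<Rightarrow> nat \<times> struc \<Rightarrow> nat set" where
  "determined_values X \<Gamma> p = {v. \<exists>m\<le>fst p. \<forall>T\<in>X. restr (fst p) T = p \<longrightarrow> \<Gamma> T m = v}"

lemma determined_values_subset:
  assumes "S \<in> X"
  shows "determined_values X \<Gamma> (restr s S) \<subseteq> range (\<Gamma> S)"
proof
  fix v assume "v \<in> determined_values X \<Gamma> (restr s S)"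
  then obtain m where "\<forall>T\<in>X. restr s T = restr s S \<longrightarrow> \<Gamma> T m = v"
    unfolding determined_values_def by auto
  with assms have "\<Gamma> S m = v" by blast
  then show "v \<in> range (\<Gamma> S)" by (rule range_eqI[OF sym])
qed

lemma determined_values_mono:
  assumes "s \<le> s'"
  shows "determined_values X \<Gamma> (restr s S) \<subseteq> determined_values X \<Gamma> (restr s' S)"
proof
  fix v assume "v \<in> determined_values X \<Gamma> (restr s S)"
  then obtain m where m: "m \<le> s" "\<forall>T\<in>X. restr s T = restr s S \<longrightarrow> \<Gamma> T m = v"
    unfolding determined_values_def by auto
  have "\<forall>T\<in>X. restr s' T = restr s' S \<longrightarrow> \<Gamma> T m = v"
    using m(2) restr_eq_le[OF assms] by blast
  moreover have "m \<le> s'" using m(1) assms by simp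
  ultimately show "v \<in> determined_values X \<Gamma> (restr s' S)"
    unfolding determined_values_def by auto
qed

lemma eventually_determined_value:
  assumes "continuous_on X \<Gamma>" "S \<in> X" "v \<in> range (\<Gamma> S)"
  shows "\<forall>\<^sub>F s in sequentially. v \<in> determined_values X \<Gamma> (restr s S)"
proof -
  obtain m where m: "v = \<Gamma> S m" using assms(3) by blast
  obtain k where k: "\<forall>T\<in>X. restr k T = restr k S \<longrightarrow> \<Gamma> T m = \<Gamma> S m"
    using continuous_on_struc_locally_determined[OF assms(1,2)] by blast
  have "v \<in> determined_values X \<Gamma> (restr s S)" if "max k m \<le> s" for s
  proof -
    have "k \<le> s" using that by simp
    then have "\<forall>T\<in>X. restr s T = restr s S \<longrightarrow> \<Gamma> T m = v"
      using k m restr_eq_le[of k s] by blast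
    with that show ?thesis unfolding determined_values_def by auto
  qed
  then show ?thesis unfolding eventually_sequentially by blast
qed

lemma finite_separating_set:
  fixes R :: "'a \<Rightarrow> 'b set"
  assumes "finite K" "inj_on R K"
  obtains D where "finite D" "inj_on (\<lambda>A. R A \<inter> D) K"
proof -
  define d where "d A B = (SOME x. x \<in> R A \<longleftrightarrow> x \<notin> R B)" for A B
  define D where "D = (\<lambda>(A, B). d A B) ` (K \<times> K)"
  have d: "d A B \<in> R A \<longleftrightarrow> d A B \<notin> R B" if "A \<in> K" "B \<in> K" "A \<noteq> B" for A B
  proof -
    have "R A \<noteq> R B" using assms(2) that unfolding inj_on_def by blast
    then have "\<exists>x. x \<in> R A \<longleftrightarrow> x \<notin> R B" by blast
    then show ?thesis unfolding d_def by (rule someI_ex)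
  qed
  have "inj_on (\<lambda>A. R A \<inter> D) K"
  proof (rule inj_onI, rule ccontr)
    fix A B assume AB: "A \<in> K" "B \<in> K" "A \<noteq> B" and eq: "R A \<inter> D = R B \<inter> D"
    have "d A B \<in> D" unfolding D_def using AB(1,2) by force
    moreover from eq have "d A B \<in> R A \<inter> D \<longleftrightarrow> d A B \<in> R B \<inter> D" by simp
    ultimately show False using d[OF AB] by simp
  qed
  moreover have "finite D" unfolding D_def using assms(1) by simp
  ultimately show thesis using that by blast
qed

definition decode_on :: "'a set \<Rightarrow> ('a \<Rightarrow> 'b) \<Rightarrow> 'b \<Rightarrow> 'a option" where
  "decode_on K g y = (if y \<in> g ` K then Some (SOME A. A \<in> K \<and> g A = y) else None)"

lemma decode_on_range: "decode_on K g y \<in> Some ` K \<union> {None}"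
proof (cases "y \<in> g ` K")
  case True
  then have "\<exists>A. A \<in> K \<and> g A = y" by blast
  from someI_ex[OF this] show ?thesis unfolding decode_on_def by auto
qed (simp add: decode_on_def)

lemma decode_on_eq_Some:
  assumes "inj_on g K"
  shows "decode_on K g y = Some A \<longleftrightarrow> A \<in> K \<and> g A = y"
proof
  assume "decode_on K g y = Some A"
  then have "y \<in> g ` K" "A = (SOME A. A \<in> K \<and> g A = y)"
    unfolding decode_on_def by (auto split: if_splits)
  moreover from this(1) have "\<exists>A. A \<in> K \<and> g A = y" by blast
  ultimately show "A \<in> K \<and> g A = y" using someI_ex[of "\<lambda>A. A \<in> K \<and> g A = y"] by simp
next
  assume A: "A \<in> K \<and> g A = y"
  then have "(SOME A. A \<in> K \<and> g A = y) = A"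
    using assms unfolding inj_on_def by (intro some_equality) auto
  moreover have "y \<in> g ` K" using A by blast
  ultimately show "decode_on K g y = Some A" unfolding decode_on_def by simp
qed

lemma reduces_to_range_iso:
  assumes "reduces_to_range sig K \<Gamma>" "family sig K" "S \<in> LD sig K" "A \<in> K" "iso S A"
  shows "range (\<Gamma> S) = range (\<Gamma> A)"
  using assms family_in_LD[OF assms(2,4)] unfolding reduces_to_range_def by blast

lemma reduces_to_range_inj_on:
  assumes "reduces_to_range sig K \<Gamma>" "family sig K"
  shows "inj_on (\<lambda>A. range (\<Gamma> A)) K"
proof (rule inj_onI)
  fix A B assume "A \<in> K" "B \<in> K" "range (\<Gamma> A) = range (\<Gamma> B)"
  then have "iso A B"
    using assms family_in_LD[OF assms(2)] unfolding reduces_to_range_def by simp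
  with assms(2) \<open>A \<in> K\<close> \<open>B \<in> K\<close> show "A = B" unfolding family_def by blast
qed

text \<open>With a finite set D of values separating the ranges of the members of K, the learner names
  the member whose range meets D exactly in the values already determined by the data.\<close>

definition range_learner ::
  "nat list \<Rightarrow> struc set \<Rightarrow> (struc \<Rightarrow> nat \<Rightarrow> nat) \<Rightarrow> nat set \<Rightarrow> learner" where
  "range_learner sig K \<Gamma> D p =
     decode_on K (\<lambda>A. range (\<Gamma> A) \<inter> D) (determined_values (LD sig K) \<Gamma> p \<inter> D)"

lemma range_learner_eq_Some:
  assumes red: "reduces_to_range sig K \<Gamma>" and fam: "family sig K"
    and D: "inj_on (\<lambda>A. range (\<Gamma> A) \<inter> D) K"
    and S: "S \<in> LD sig K" and A: "A \<in> K" "iso S A"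
  shows "range_learner sig K \<Gamma> D (restr s S) = Some A \<longleftrightarrow>
    range (\<Gamma> A) \<inter> D \<subseteq> determined_values (LD sig K) \<Gamma> (restr s S)"
proof -
  let ?det = "determined_values (LD sig K) \<Gamma> (restr s S)"
  have "?det \<inter> D \<subseteq> range (\<Gamma> A) \<inter> D"
    using determined_values_subset[OF S, of \<Gamma> s] reduces_to_range_iso[OF red fam S A] by blast
  then have "range (\<Gamma> A) \<inter> D = ?det \<inter> D \<longleftrightarrow> range (\<Gamma> A) \<inter> D \<subseteq> ?det"
    by blast
  then show ?thesis unfolding range_learner_def decode_on_eq_Some[OF D] using A(1) by simp
qed

lemma Ex_learns_range_learner:
  assumes red: "reduces_to_range sig K \<Gamma>" and fam: "family sig K"
    and D: "finite D" "inj_on (\<lambda>A. range (\<Gamma> A) \<inter> D) K"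
  shows "Ex_learns sig K (range_learner sig K \<Gamma> D)"
  unfolding Ex_learns_def
proof (intro conjI ballI)
  show "is_learner sig K (range_learner sig K \<Gamma> D)"
    unfolding is_learner_def range_learner_def by (intro ballI allI decode_on_range)
next
  fix S assume S: "S \<in> LD sig K"
  then obtain A where A: "A \<in> K" "iso S A" unfolding LD_def by blast
  let ?det = "determined_values (LD sig K) \<Gamma>"
  have "\<forall>v\<in>range (\<Gamma> A) \<inter> D. \<forall>\<^sub>F s in sequentially. v \<in> ?det (restr s S)"
    using eventually_determined_value[of "LD sig K" \<Gamma>, OF _ S] red
      reduces_to_range_iso[OF red fam S A] unfolding reduces_to_range_def by blast
  then have "\<forall>\<^sub>F s in sequentially. \<forall>v\<in>range (\<Gamma> A) \<inter> D. v \<in> ?det (restr s S)"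
    by (rule eventually_ball_finite[rotated]) (simp add: D(1))
  then have "\<forall>\<^sub>F s in sequentially. range_learner sig K \<Gamma> D (restr s S) = Some A"
    by (rule eventually_mono) (simp add: range_learner_eq_Some[OF red fam D(2) S A] subset_eq)
  with A show "\<exists>A\<in>K. iso S A \<and>
      (\<forall>\<^sub>F n in sequentially. range_learner sig K \<Gamma> D (restr n S) = Some A)" by blast
qed

lemma nonU_shaped_range_learner:
  assumes red: "reduces_to_range sig K \<Gamma>" and fam: "family sig K"
    and D: "inj_on (\<lambda>A. range (\<Gamma> A) \<inter> D) K"
  shows "nonU_shaped sig K (range_learner sig K \<Gamma> D)"
  unfolding nonU_shaped_def
proof (intro ballI impI allI)
  fix S A n m assume S: "S \<in> LD sig K" and A: "A \<in> K" "iso S A"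
    and "n \<le> m" "range_learner sig K \<Gamma> D (restr n S) = Some A"
  then show "range_learner sig K \<Gamma> D (restr m S) = Some A"
    using determined_values_mono[OF \<open>n \<le> m\<close>, of "LD sig K" \<Gamma> S]
    unfolding range_learner_eq_Some[OF red fam D S A] by blast
qed

lemma Erange_fin_imp_nUs:
  assumes fam: "family sig K" and fin: "finite K" and Er: "Erange_learnable sig K"
  shows "nUs_learnable sig K"
proof -
  obtain \<Gamma> where red: "reduces_to_range sig K \<Gamma>" using Er unfolding Erange_learnable_iff ..
  obtain D where D: "finite D" "inj_on (\<lambda>A. range (\<Gamma> A) \<inter> D) K"
    using finite_separating_set[OF fin reduces_to_range_inj_on[OF red fam]] by blast
  show ?thesis unfolding nUs_learnable_iff
    using Ex_learns_range_learner[OF red fam D] nonU_shaped_range_learner[OF red fam D(2)] by blast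
qed

section \<open>Unary structures\<close>

definition unary :: "nat set \<Rightarrow> struc" where
  "unary P = (\<lambda>i xs. i = 0 \<and> (\<exists>x. xs = [x] \<and> x \<in> P))"

lemma unary_singleton [simp]: "unary P 0 [x] \<longleftrightarrow> x \<in> P"
  unfolding unary_def by simp

lemma unary_inject [simp]: "unary P = unary Q \<longleftrightarrow> P = Q"
proof
  assume "unary P = unary Q"
  then have "x \<in> P \<longleftrightarrow> x \<in> Q" for x by (metis unary_singleton)
  then show "P = Q" by blast
qed simp

lemma wf_struc_unary: "wf_struc [1] (unary P)"
  unfolding wf_struc_def unary_def by auto

lemma wf_struc_unaryE:
  assumes "wf_struc [1] S"
  obtains P where "S = unary P"
proof
  show "S = unary {x. S 0 [x]}"
  proof (intro ext iffI)
    fix i xs assume "S i xs"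
    with assms have "i < 1" "length xs = [1::nat] ! i" unfolding wf_struc_def by auto
    then have "i = 0" "length xs = 1" by auto
    with \<open>S i xs\<close> show "unary {x. S 0 [x]} i xs" by (auto simp: length_Suc_conv)
  qed (auto simp: unary_def)
qed

lemma pullback_unary: "pullback f (unary Q) = unary (f -` Q)"
  unfolding pullback_def unary_def by (auto intro!: ext simp: map_eq_Cons_conv)

lemma iso_unary_iff: "iso (unary P) (unary Q) \<longleftrightarrow> (\<exists>f. bij f \<and> P = f -` Q)"
  unfolding iso_iff_pullback pullback_unary by simp

lemma bij_betw_vimage:
  assumes "bij f"
  shows "bij_betw f (f -` Q) Q"
  unfolding bij_betw_def
proof
  show "inj_on f (f -` Q)" using bij_is_inj[OF assms] by (rule inj_on_subset) simp
  show "f ` f -` Q = Q" using bij_is_surj[OF assms] by (rule surj_image_vimage_eq)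
qed

lemma iso_unaryD:
  assumes "iso (unary P) (unary Q)"
  shows "card P = card Q" "finite P \<longleftrightarrow> finite Q" "finite (-P) \<longleftrightarrow> finite (-Q)"
proof -
  obtain f where f: "bij f" "P = f -` Q" using assms unfolding iso_unary_iff by blast
  then have "bij_betw f P Q" "bij_betw f (-P) (-Q)"
    by (simp_all add: bij_betw_vimage flip: vimage_Compl)
  then show "card P = card Q" "finite P \<longleftrightarrow> finite Q" "finite (-P) \<longleftrightarrow> finite (-Q)"
    by (simp_all add: bij_betw_same_card bij_betw_finite)
qed

lemma bij_betw_infinite_nat:
  fixes A B :: "nat set"
  assumes "infinite A" "infinite B"
  shows "\<exists>e. bij_betw e A B"
proof -
  have "bij_betw (enumerate A) UNIV A" "bij_betw (enumerate B) UNIV B"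
    using assms bij_enumerate by blast+
  then have "bij_betw (enumerate B \<circ> inv_into UNIV (enumerate A)) A B"
    using bij_betw_trans bij_betw_inv_into by blast
  then show ?thesis by blast
qed

lemma iso_unaryI:
  assumes "bij_betw g P Q" "bij_betw e (-P) (-Q)"
  shows "iso (unary P) (unary Q)"
proof -
  define f where "f x = (if x \<in> P then g x else e x)" for x
  have P: "bij_betw f P Q"
    using assms(1) by (rule bij_betw_cong[THEN iffD1, rotated]) (simp add: f_def)
  have nP: "bij_betw f (-P) (-Q)"
    using assms(2) by (rule bij_betw_cong[THEN iffD1, rotated]) (simp add: f_def)
  have "bij_betw f (P \<union> -P) (Q \<union> -Q)" by (rule bij_betw_combine[OF P nP]) auto
  then have "bij f" by simp
  moreover have "x \<in> P \<longleftrightarrow> f x \<in> Q" for x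
    using P nP by (cases "x \<in> P") (auto simp: bij_betw_def)
  then have "P = f -` Q" by auto
  ultimately show ?thesis unfolding iso_unary_iff by blast
qed

lemma iso_unary_iff_card:
  assumes "infinite (-P)" "infinite (-Q)"
  shows "iso (unary P) (unary Q) \<longleftrightarrow> (finite P \<longleftrightarrow> finite Q) \<and> card P = card Q"
proof
  assume "iso (unary P) (unary Q)"
  then show "(finite P \<longleftrightarrow> finite Q) \<and> card P = card Q" using iso_unaryD by simp
next
  assume PQ: "(finite P \<longleftrightarrow> finite Q) \<and> card P = card Q"
  obtain e where e: "bij_betw e (-P) (-Q)" using bij_betw_infinite_nat[OF assms] by blast
  have "\<exists>g. bij_betw g P Q"
  proof (cases "finite P")
    case True
    with PQ show ?thesis using finite_same_card_bij by blast
  next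
    case False
    with PQ show ?thesis using bij_betw_infinite_nat by blast
  qed
  then obtain g where "bij_betw g P Q" ..
  then show "iso (unary P) (unary Q)" using e by (rule iso_unaryI)
qed

lemma restr_unary_eqI:
  "(\<And>x. x \<le> k \<Longrightarrow> x \<in> P \<longleftrightarrow> x \<in> Q) \<Longrightarrow> restr k (unary P) = restr k (unary Q)"
  by (rule restr_eqI) (auto simp: unary_def)

lemma infinite_Compl_finite: "finite (F :: nat set) \<Longrightarrow> infinite (-F)"
  by (simp add: Finite_Set.finite_compl)

definition K_at_most_one :: "struc set" where
  "K_at_most_one = {unary {}, unary {0}}"

lemma family_K_at_most_one: "family [1] K_at_most_one"
  unfolding family_def K_at_most_one_def
proof (intro conjI ballI impI)
  fix A B assume "A \<in> {unary {}, unary {0}}" "B \<in> {unary {}, unary {0}}" "iso A B"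
  then show "A = B" using iso_unaryD(1)[of "{}" "{0}"] iso_unaryD(1)[of "{0}" "{}"] by auto
qed (use wf_struc_unary in auto)

lemma LD_K_at_most_one:
  assumes "S \<in> LD [1] K_at_most_one"
  shows "(S = unary {} \<and> iso S (unary {})) \<or> (\<exists>a. S = unary {a} \<and> iso S (unary {0}))"
proof -
  obtain P where P: "S = unary P" using assms unfolding LD_def by (blast elim: wf_struc_unaryE)
  obtain A where A: "A \<in> K_at_most_one" "iso S A" using assms unfolding LD_def by blast
  show ?thesis
  proof (cases "A = unary {}")
    case True
    with A P have "finite P" "card P = 0" using iso_unaryD[of P "{}"] by auto
    with A P True show ?thesis by simp
  next
    case False
    with A P have "A = unary {0}" "card P = 1" using iso_unaryD(1)[of P "{0}"] by (auto simp: K_at_most_one_def)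
    with A P show ?thesis by (metis card_1_singletonE)
  qed
qed

definition seen_point_learner :: learner where
  "seen_point_learner p = (if \<exists>x\<le>fst p. snd p 0 [x] then Some (unary {0}) else Some (unary {}))"

lemma seen_point_learner_unary:
  "seen_point_learner (restr s (unary P)) = (if \<exists>x\<le>s. x \<in> P then Some (unary {0}) else Some (unary {}))"
  unfolding seen_point_learner_def by (simp add: restr_def)

lemma Ex_learns_seen_point_learner: "Ex_learns [1] K_at_most_one seen_point_learner"
  unfolding Ex_learns_def
proof (intro conjI ballI)
  show "is_learner [1] K_at_most_one seen_point_learner"
    unfolding is_learner_def seen_point_learner_def K_at_most_one_def by auto
next
  fix S assume "S \<in> LD [1] K_at_most_one"
  then consider "S = unary {}" "iso S (unary {})" | a where "S = unary {a}" "iso S (unary {0})"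
    using LD_K_at_most_one by blast
  then show "\<exists>A\<in>K_at_most_one. iso S A \<and>
      (\<forall>\<^sub>F n in sequentially. seen_point_learner (restr n S) = Some A)"
  proof cases
    case 1
    then show ?thesis by (auto simp: K_at_most_one_def seen_point_learner_unary)
  next
    case (2 a)
    then have "\<forall>\<^sub>F n in sequentially. seen_point_learner (restr n S) = Some (unary {0})"
      unfolding eventually_sequentially by (auto simp: seen_point_learner_unary)
    with 2 show ?thesis by (auto simp: K_at_most_one_def)
  qed
qed

lemma nonU_shaped_seen_point_learner: "nonU_shaped [1] K_at_most_one seen_point_learner"
  unfolding nonU_shaped_def
proof (intro ballI impI allI)
  fix S A n m assume S: "S \<in> LD [1] K_at_most_one" and A: "A \<in> K_at_most_one" "iso S A"
    and "n \<le> m" and n: "seen_point_learner (restr n S) = Some A"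
  from S consider "S = unary {}" | a where "S = unary {a}" "iso S (unary {0})"
    using LD_K_at_most_one by blast
  then show "seen_point_learner (restr m S) = Some A"
  proof cases
    case 1
    with n have "A = unary {}" by (simp add: seen_point_learner_unary)
    with 1 show ?thesis by (simp add: seen_point_learner_unary)
  next
    case (2 a)
    have "A = unary {0}"
      using family_iso_unique[OF family_K_at_most_one A(1) _ A(2) 2(2)]
      by (simp add: K_at_most_one_def)
    with 2 \<open>n \<le> m\<close> n show ?thesis
      by (auto simp: seen_point_learner_unary split: if_splits)
  qed
qed

lemma K_at_most_one_nUs: "nUs_learnable [1] K_at_most_one"
  unfolding nUs_learnable_iff
  using Ex_learns_seen_point_learner nonU_shaped_seen_point_learner by blast

text \<open>A co-learner must eventually name unary {0} on the empty structure; a singleton placed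
  beyond that point gives a copy of unary {0} on which it names unary {0} itself.\<close>

lemma K_at_most_one_not_co: "\<not> co_learnable [1] K_at_most_one"
proof
  assume "co_learnable [1] K_at_most_one"
  then obtain M where co: "co_learns [1] K_at_most_one M" unfolding co_learnable_iff by blast
  have fam: "family [1] K_at_most_one" by (rule family_K_at_most_one)
  have K: "unary {} \<in> K_at_most_one" "unary {0} \<in> K_at_most_one" "unary {} \<noteq> unary {0}"
    unfolding K_at_most_one_def by auto
  obtain s where s: "unary {0} \<in> named_by M K_at_most_one (restr s (unary {}))"
    using eventually_happens'[OF _ co_learns_eventually_names[OF co family_in_LD[OF fam K(1)] K(1)
      iso_refl K(2) K(3)[symmetric]]] by auto
  define T where "T = unary {Suc s}"
  have T: "iso T (unary {0})" unfolding T_def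
    by (subst iso_unary_iff_card) (auto intro: infinite_Compl_finite)
  have "restr s T = restr s (unary {})" unfolding T_def by (rule restr_unary_eqI) auto
  then have "unary {0} \<in> named_by M K_at_most_one (restr s T)"
    using s by simp
  with co_learns_never_names[OF co iso_in_LD[OF fam K(2) T] K(2) T] show False by blast
qed

definition K_sizes :: "struc set" where
  "K_sizes = unary ` (range lessThan \<union> {Collect even})"

lemma infinite_evens: "infinite (Collect even :: nat set)"
  unfolding infinite_nat_iff_unbounded_le
proof
  fix m :: nat show "\<exists>n\<ge>m. n \<in> Collect even" by (intro exI[of _ "2 * m"]) auto
qed

lemma infinite_odds: "infinite (- Collect even :: nat set)"
  unfolding infinite_nat_iff_unbounded_le
proof
  fix m :: nat show "\<exists>n\<ge>m. n \<in> - Collect even" by (intro exI[of _ "2 * m + 1"]) auto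
qed

lemma K_sizes_unary:
  assumes "A \<in> K_sizes"
  obtains P where "A = unary P" "infinite (-P)"
proof -
  obtain P where P: "A = unary P" "P \<in> range lessThan \<union> {Collect even}"
    using assms unfolding K_sizes_def by blast
  then have "infinite (-P)"
    using infinite_odds by (auto simp: infinite_Compl_finite simp del: Compl_lessThan)
  with P(1) show thesis by (rule that)
qed

lemma family_K_sizes: "family [1] K_sizes"
  unfolding family_def
proof (intro conjI ballI impI)
  show "countable K_sizes" unfolding K_sizes_def by simp
next
  fix A assume "A \<in> K_sizes" then show "wf_struc [1] A"
    unfolding K_sizes_def using wf_struc_unary by blast
next
  fix A B assume "A \<in> K_sizes" "B \<in> K_sizes" "iso A B"
  then obtain P Q where PQ: "A = unary P" "B = unary Q"
    "P \<in> range lessThan \<union> {Collect even}" "Q \<in> range lessThan \<union> {Collect even}"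
    unfolding K_sizes_def by blast
  with \<open>iso A B\<close> have "finite P \<longleftrightarrow> finite Q" "card P = card Q"
    using iso_unaryD by auto
  with PQ infinite_evens show "A = B" by auto
qed

lemma LD_K_sizesE:
  assumes "S \<in> LD [1] K_sizes"
  obtains P where "S = unary P" "infinite (-P)"
proof -
  have "wf_struc [1] S" using assms unfolding LD_def by blast
  then obtain P where P: "S = unary P" by (rule wf_struc_unaryE)
  obtain A where A: "A \<in> K_sizes" "iso S A" using assms unfolding LD_def by blast
  obtain Q where "A = unary Q" "infinite (-Q)" using A(1) by (rule K_sizes_unary)
  with A P have "infinite (-P)" using iso_unaryD(3) by blast
  with P show thesis by (rule that)
qed

definition count_below :: "nat set \<Rightarrow> nat \<Rightarrow> nat" where
  "count_below P m = card {x\<in>P. x < m}"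

lemma count_below_Suc: "count_below P (Suc m) = count_below P m + (if m \<in> P then 1 else 0)"
proof -
  have "{x\<in>P. x < Suc m} = (if m \<in> P then insert m {x\<in>P. x < m} else {x\<in>P. x < m})"
    by (auto simp: less_Suc_eq)
  then show ?thesis unfolding count_below_def by simp
qed

lemma count_below_intermediate: "j \<le> count_below P m \<Longrightarrow> j \<in> range (count_below P)"
proof (induction m)
  case 0
  then have "j = count_below P 0" by (simp add: count_below_def)
  then show ?case by (rule range_eqI)
next
  case (Suc m)
  show ?case
  proof (cases "j \<le> count_below P m")
    case False
    with Suc.prems have "j = count_below P (Suc m)" by (auto simp: count_below_Suc split: if_splits)
    then show ?thesis by (rule range_eqI)
  qed (rule Suc.IH)
qed

lemma range_count_below:
  "range (count_below P) = (if finite P then {..card P} else UNIV)"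
proof (cases "finite P")
  case True
  have "count_below P m \<le> card P" for m
    unfolding count_below_def using True by (intro card_mono) auto
  moreover have "count_below P (Suc (Max (insert 0 P))) = card P"
    unfolding count_below_def using True
    by (intro arg_cong[where f=card]) (auto simp: le_imp_less_Suc)
  ultimately show ?thesis
    using True count_below_intermediate[of _ P "Suc (Max (insert 0 P))"] by auto
next
  case False
  have "j \<in> range (count_below P)" for j
  proof -
    obtain F where F: "F \<subseteq> P" "finite F" "card F = j"
      using infinite_arbitrarily_large[OF False] by blast
    then have "F \<subseteq> {x\<in>P. x < Suc (Max (insert 0 F))}" by (auto simp: le_imp_less_Suc)
    then have "j \<le> count_below P (Suc (Max (insert 0 F)))"
      unfolding count_below_def using F(3) by (intro card_mono[of _ F, simplified F(3)]) auto
    then show ?thesis by (rule count_below_intermediate)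
  qed
  with False show ?thesis by auto
qed

lemma range_count_below_eq_iff:
  "range (count_below P) = range (count_below Q) \<longleftrightarrow> (finite P \<longleftrightarrow> finite Q) \<and> card P = card Q"
  unfolding range_count_below
  by (auto dest: arg_cong[where f=finite])

lemma K_sizes_Erange: "Erange_learnable [1] K_sizes"
proof -
  define \<Gamma> :: "struc \<Rightarrow> nat \<Rightarrow> nat" where "\<Gamma> S = count_below {x. S 0 [x]}" for S
  have "\<Gamma> S m = card {x. x < m \<and> snd (restr m S) 0 [x]}" for S m
    unfolding \<Gamma>_def count_below_def restr_def by (auto intro!: arg_cong[where f=card])
  then have "continuous_on (LD [1] K_sizes) \<Gamma>"
    by (auto intro!: continuous_on_coordinatewise_then_product continuous_on_restr simp: LD_def)
  moreover have "iso S T \<longleftrightarrow> range (\<Gamma> S) = range (\<Gamma> T)"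
    if S: "S \<in> LD [1] K_sizes" and T: "T \<in> LD [1] K_sizes" for S T
  proof -
    obtain P where "S = unary P" "infinite (-P)" using LD_K_sizesE[OF S] by blast
    moreover obtain Q where "T = unary Q" "infinite (-Q)" using LD_K_sizesE[OF T] by blast
    ultimately show ?thesis
      unfolding \<Gamma>_def by (simp add: iso_unary_iff_card range_count_below_eq_iff)
  qed
  ultimately show ?thesis
    unfolding Erange_learnable_iff reduces_to_range_def by blast
qed

lemma sparse_range:
  fixes n :: "nat \<Rightarrow> nat"
  assumes gap: "\<And>j. Suc (n j) < n (Suc j)"
  defines "P \<equiv> range (\<lambda>j. Suc (n j))"
  shows "infinite P" "infinite (-P)"
    and "x \<le> n k \<Longrightarrow> x \<in> P \<longleftrightarrow> x \<in> (\<lambda>j. Suc (n j)) ` {..<k}"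
proof -
  have mono: "strict_mono n"
    using gap by (intro strict_monoI_Suc) (meson Suc_lessD)
  show agree: "x \<in> P \<longleftrightarrow> x \<in> (\<lambda>j. Suc (n j)) ` {..<k}" if "x \<le> n k" for x k
  proof
    assume "x \<in> P"
    then obtain j where j: "x = Suc (n j)" unfolding P_def by blast
    have "j < k"
    proof (rule ccontr)
      assume "\<not> j < k"
      then have "n k \<le> n j" using mono by (simp add: strict_mono_less_eq)
      with j that show False by simp
    qed
    with j show "x \<in> (\<lambda>j. Suc (n j)) ` {..<k}" by blast
  qed (auto simp: P_def)
  show "infinite P"
    unfolding P_def using mono by (intro range_inj_infinite) (simp add: inj_def strict_mono_eq)
  have "n k \<notin> P" for k
  proof
    assume "n k \<in> P"
    then obtain j where "j < k" "n k = Suc (n j)" using agree[of "n k" k] by auto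
    moreover have "Suc (n j) \<le> n (Suc j)" using gap[of j] by simp
    moreover have "n (Suc j) \<le> n k" using \<open>j < k\<close> mono by (simp add: strict_mono_less_eq)
    ultimately show False using gap[of j] by simp
  qed
  then have "range n \<subseteq> -P" by blast
  moreover have "infinite (range n)" using mono by (intro range_inj_infinite strict_mono_imp_inj_on)
  ultimately show "infinite (-P)" by (rule infinite_super)
qed

text \<open>Diagonalisation: P is built by adding, at each stage, a point just above a position
  where the property already holds for the finite part built so far.\<close>

lemma diagonal_set:
  fixes bad :: "nat set \<Rightarrow> nat \<Rightarrow> bool"
  assumes fin: "\<And>Q. finite Q \<Longrightarrow> \<forall>\<^sub>F n in sequentially. bad Q n"
    and local: "\<And>Q Q' n. (\<And>x. x \<le> n \<Longrightarrow> x \<in> Q \<longleftrightarrow> x \<in> Q') \<Longrightarrow>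
      bad Q n \<Longrightarrow> bad Q' n"
  shows "\<exists>P. infinite P \<and> infinite (-P) \<and> (\<exists>\<^sub>F n in sequentially. bad P n)"
proof -
  define next_stage where
    "next_stage Q = (SOME n. Suc (Max (insert 0 Q)) < n \<and> bad Q n)" for Q
  have next_stage: "Suc (Max (insert 0 Q)) < next_stage Q \<and> bad Q (next_stage Q)"
    if Q: "finite Q" for Q
  proof -
    obtain N where "\<And>n. N \<le> n \<Longrightarrow> bad Q n"
      using fin[OF Q] unfolding eventually_sequentially by blast
    then have "Suc (Max (insert 0 Q)) < max N (Suc (Suc (Max (insert 0 Q))))
        \<and> bad Q (max N (Suc (Suc (Max (insert 0 Q)))))" by simp
    then show ?thesis unfolding next_stage_def by (rule someI)
  qed
  define stage where "stage = rec_nat {} (\<lambda>_ Q. insert (Suc (next_stage Q)) Q)"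
  define n where "n k = next_stage (stage k)" for k
  have stage_eq: "stage k = (\<lambda>j. Suc (n j)) ` {..<k}" for k
    by (induction k) (auto simp: stage_def n_def lessThan_Suc)
  have fin_stage: "finite (stage k)" for k unfolding stage_eq by simp
  have gap: "Suc (n j) < n (Suc j)" for j
  proof -
    have "Suc (n j) \<le> Max (insert 0 (stage (Suc j)))"
      using fin_stage unfolding stage_eq by (intro Max_ge) auto
    then show ?thesis using next_stage[OF fin_stage, of "Suc j"] unfolding n_def by linarith
  qed
  define P where "P = range (\<lambda>j. Suc (n j))"
  have "bad P (n k)" for k
  proof (rule local)
    show "bad (stage k) (n k)" using next_stage[OF fin_stage] unfolding n_def by blast
    show "x \<in> stage k \<longleftrightarrow> x \<in> P" if "x \<le> n k" for x
      using sparse_range(3)[of n, OF gap that] unfolding P_def stage_eq by simp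
  qed
  moreover have "k \<le> n k" for k
    using gap by (intro strict_mono_imp_increasing strict_monoI_Suc) (meson Suc_lessD)
  ultimately have "\<exists>\<^sub>F m in sequentially. bad P m"
    unfolding frequently_sequentially by blast
  with sparse_range(1,2)[of n, OF gap] show ?thesis unfolding P_def by blast
qed

lemma K_sizes_not_Ex: "\<not> Ex_learnable [1] K_sizes"
proof
  assume "Ex_learnable [1] K_sizes"
  then obtain M where M: "Ex_learns [1] K_sizes M" unfolding Ex_learnable_def by blast
  let ?E = "unary (Collect even)"
  let ?bad = "\<lambda>Q n. M (restr n (unary Q)) \<noteq> Some ?E"
  have E: "?E \<in> K_sizes" unfolding K_sizes_def by blast
  have "\<forall>\<^sub>F n in sequentially. ?bad Q n" if Q: "finite Q" for Q
  proof -
    have "unary {..<card Q} \<in> K_sizes" unfolding K_sizes_def by blast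
    moreover have "iso (unary Q) (unary {..<card Q})"
      using Q infinite_Compl_finite[OF Q] infinite_Compl_finite[of "{..<card Q}"]
      by (simp add: iso_unary_iff_card del: Compl_lessThan)
    ultimately have "\<forall>\<^sub>F n in sequentially. M (restr n (unary Q)) = Some (unary {..<card Q})"
      by (rule Ex_learnsD[OF M family_K_sizes])
    moreover have "unary {..<card Q} \<noteq> ?E"
      using infinite_evens unary_inject finite_lessThan by metis
    ultimately show ?thesis by (simp add: eventually_mono)
  qed
  moreover have "?bad Q' n" if "\<And>x. x \<le> n \<Longrightarrow> x \<in> Q \<longleftrightarrow> x \<in> Q'" "?bad Q n" for Q Q' n
    using that restr_unary_eqI[of n Q Q'] by simp
  ultimately obtain P where P: "infinite P" "infinite (-P)" "\<exists>\<^sub>F n in sequentially. ?bad P n"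
    using diagonal_set[of ?bad] by blast
  have "iso (unary P) ?E"
    using P infinite_evens infinite_odds by (simp add: iso_unary_iff_card)
  then have "\<forall>\<^sub>F n in sequentially. \<not> ?bad P n" using Ex_learnsD[OF M family_K_sizes E] by simp
  with P(3) show False unfolding frequently_def by simp
qed

section \<open>The orders omega and omega_star\<close>

definition order_struc :: "(nat \<Rightarrow> nat \<Rightarrow> bool) \<Rightarrow> struc" where
  "order_struc R = (\<lambda>i xs. i = 0 \<and> (\<exists>x y. xs = [x, y] \<and> R x y))"

definition omega :: struc where
  "omega = order_struc (\<lambda>x y. x \<le> y)"

definition omega_star :: struc where
  "omega_star = order_struc (\<lambda>x y. y \<le> x)"

definition K_omega :: "struc set" where
  "K_omega = {omega, omega_star}"

lemma order_struc_pair [simp]: "order_struc R 0 [x, y] \<longleftrightarrow> R x y"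
  unfolding order_struc_def by simp

lemma order_struc_inject [simp]: "order_struc R = order_struc R' \<longleftrightarrow> R = R'"
proof
  assume "order_struc R = order_struc R'"
  then have "R x y \<longleftrightarrow> R' x y" for x y by (metis order_struc_pair)
  then show "R = R'" by blast
qed simp

lemma pullback_order_struc: "pullback f (order_struc R) = order_struc (\<lambda>x y. R (f x) (f y))"
  unfolding pullback_def order_struc_def by (auto intro!: ext simp: map_eq_Cons_conv)

lemma iso_order_struc_iff:
  "iso S (order_struc R) \<longleftrightarrow> (\<exists>f. bij f \<and> S = order_struc (\<lambda>x y. R (f x) (f y)))"
  unfolding iso_iff_pullback pullback_order_struc ..

lemma restr_order_struc_eqI:
  assumes "\<And>x y. x \<le> k \<Longrightarrow> y \<le> k \<Longrightarrow> R x y \<longleftrightarrow> R' x y"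
  shows "restr k (order_struc R) = restr k (order_struc R')"
proof (rule restr_eqI)
  fix i xs assume "\<forall>x\<in>set xs. x \<le> k"
  with assms show "order_struc R i xs = order_struc R' i xs"
    unfolding order_struc_def by auto
qed

lemma not_iso_omega_omega_star: "\<not> iso omega omega_star"
proof
  assume "iso omega omega_star"
  then obtain f :: "nat \<Rightarrow> nat" where "bij f" "\<And>x y. x \<le> y \<longleftrightarrow> f y \<le> f x"
    unfolding omega_def omega_star_def iso_order_struc_iff order_struc_inject
    unfolding fun_eq_iff by blast
  then have "f y \<le> f 0" for y by (metis zero_le)
  then have "range f \<subseteq> {..f 0}" by auto
  then have "finite (range f)" by (rule finite_subset) simp
  moreover have "range f = UNIV" using \<open>bij f\<close> by (rule bij_is_surj)
  ultimately show False by simp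
qed

lemma family_K_omega: "family [2] K_omega"
  unfolding family_def
proof (intro conjI ballI impI)
  show "countable K_omega" unfolding K_omega_def by simp
next
  fix A assume "A \<in> K_omega" then show "wf_struc [2] A"
    unfolding K_omega_def omega_def omega_star_def order_struc_def wf_struc_def by auto
next
  fix A B assume "A \<in> K_omega" "B \<in> K_omega" "iso A B"
  then show "A = B"
    using not_iso_omega_omega_star iso_sym[of omega_star omega] unfolding K_omega_def by blast
qed

lemma finite_inj_on_extends_to_bij:
  fixes h :: "nat \<Rightarrow> nat"
  assumes "finite F" "inj_on h F"
  shows "\<exists>g. bij g \<and> (\<forall>x\<in>F. g x = h x)"
proof -
  have "infinite (-F)" "infinite (- h ` F)" using assms(1) by (simp_all add: infinite_Compl_finite)
  then obtain e where e: "bij_betw e (-F) (- h ` F)" using bij_betw_infinite_nat by blast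
  define g where "g x = (if x \<in> F then h x else e x)" for x
  have "bij_betw h F (h ` F)" using assms(2) by (rule inj_on_imp_bij_betw)
  then have "bij_betw g F (h ` F)"
    by (rule bij_betw_cong[THEN iffD1, rotated]) (simp add: g_def)
  moreover have "bij_betw g (-F) (- h ` F)"
    using e by (rule bij_betw_cong[THEN iffD1, rotated]) (simp add: g_def)
  ultimately have "bij_betw g (F \<union> -F) (h ` F \<union> - h ` F)" by (rule bij_betw_combine) auto
  then show ?thesis unfolding g_def by auto
qed

text \<open>Reversing the first k+1 points shows that each of omega, omega_star agrees up to k with a
  copy of the other, so neither excludes the other.\<close>

lemma not_excludes_omega_omega_star:
  "\<not> excludes omega omega_star" "\<not> excludes omega_star omega"
proof -
  have "\<forall>k::nat. \<exists>g. bij g \<and> (\<forall>x\<in>{..k}. g x = k - x)"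
  proof
    fix k :: nat
    show "\<exists>g. bij g \<and> (\<forall>x\<in>{..k}. g x = k - x)"
      by (rule finite_inj_on_extends_to_bij) (auto simp: inj_on_def)
  qed
  from choice[OF this] obtain g :: "nat \<Rightarrow> nat \<Rightarrow> nat"
    where g: "\<forall>k. bij (g k) \<and> (\<forall>x\<in>{..k}. g k x = k - x)" ..
  have near: "restr k (pullback (g k) omega_star) = restr k omega"
    "restr k (pullback (g k) omega) = restr k omega_star" for k
    unfolding omega_def omega_star_def pullback_order_struc
    using g by (auto intro!: restr_order_struc_eqI)
  have "\<exists>T. iso T B \<and> restr k T = restr k A"
    if "A = omega \<and> B = omega_star \<or> A = omega_star \<and> B = omega" for A B k
    using iso_pullback[of "g k"] g near that by blast
  then show "\<not> excludes omega omega_star" "\<not> excludes omega_star omega"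
    unfolding not_excludes_iff by blast+
qed

lemma K_omega_not_nUs: "\<not> nUs_learnable [2] K_omega"
proof
  assume "nUs_learnable [2] K_omega"
  then obtain M where M: "Ex_learns [2] K_omega M" "nonU_shaped [2] K_omega M"
    unfolding nUs_learnable_iff by blast
  have ne: "omega \<noteq> omega_star"
  proof
    assume "omega = omega_star"
    with not_iso_omega_omega_star iso_refl[of omega] show False by simp
  qed
  have "excludes omega omega_star \<or> excludes omega_star omega"
    using nonU_shaped_excludes[OF family_K_omega M _ _ ne] by (simp add: K_omega_def)
  with not_excludes_omega_omega_star show False by simp
qed

definition least_upto :: "nat \<Rightarrow> struc \<Rightarrow> nat \<Rightarrow> bool" where
  "least_upto s S x \<longleftrightarrow> (\<forall>y\<le>s. S 0 [x, y])"

definition greatest_upto :: "nat \<Rightarrow> struc \<Rightarrow> nat \<Rightarrow> bool" where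
  "greatest_upto s S z \<longleftrightarrow> (\<forall>y\<le>s. S 0 [y, z])"

text \<open>In a copy of omega the least element eventually looks least, and each smaller index
  eventually stops looking greatest once its successor shows up; in a copy of omega_star the
  greatest element looks greatest for ever, so only indices below it could qualify, and they
  stop looking least once their successors show up.\<close>

definition looks_like_omega :: "nat \<Rightarrow> struc \<Rightarrow> bool" where
  "looks_like_omega s S \<longleftrightarrow> (\<exists>x\<le>s. least_upto s S x \<and> (\<forall>z<x. \<not> greatest_upto s S z))"

lemma looks_like_omega_restr: "looks_like_omega s (snd (restr s S)) \<longleftrightarrow> looks_like_omega s S"
  unfolding looks_like_omega_def least_upto_def greatest_upto_def restr_def by auto

lemma eventually_looks_like_omega:
  fixes f :: "nat \<Rightarrow> nat"
  assumes "bij f"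
  shows "\<forall>\<^sub>F s in sequentially. looks_like_omega s (order_struc (\<lambda>x y. f x \<le> f y))"
proof -
  have f_inv: "f (inv f n) = n" for n using assms by (simp add: bij_is_surj surj_f_inv_f)
  define x0 where "x0 = inv f 0"
  define succ where "succ z = inv f (Suc (f z))" for z
  define N where "N = Max (insert x0 (succ ` {..<x0}))"
  have "looks_like_omega s (order_struc (\<lambda>x y. f x \<le> f y))" if "N \<le> s" for s
    unfolding looks_like_omega_def
  proof (intro exI conjI allI impI)
    show "x0 \<le> s" using that unfolding N_def by (meson Max_ge finite.insertI finite_imageI
      finite_lessThan insertI1 order_trans)
    show "least_upto s (order_struc (\<lambda>x y. f x \<le> f y)) x0"
      unfolding least_upto_def x0_def by (simp add: f_inv)
    fix z assume "z < x0"
    then have "succ z \<le> s" using that unfolding N_def by (meson Max_ge finite.insertI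
      finite_imageI finite_lessThan image_eqI insertI2 lessThan_iff order_trans)
    moreover have "\<not> f (succ z) \<le> f z" unfolding succ_def by (simp add: f_inv)
    ultimately show "\<not> greatest_upto s (order_struc (\<lambda>x y. f x \<le> f y)) z"
      unfolding greatest_upto_def by auto
  qed
  then show ?thesis unfolding eventually_sequentially by blast
qed

lemma eventually_not_looks_like_omega:
  fixes f :: "nat \<Rightarrow> nat"
  assumes "bij f"
  shows "\<forall>\<^sub>F s in sequentially. \<not> looks_like_omega s (order_struc (\<lambda>x y. f y \<le> f x))"
proof -
  have f_inv: "f (inv f n) = n" for n using assms by (simp add: bij_is_surj surj_f_inv_f)
  define x1 where "x1 = inv f 0"
  define succ where "succ z = inv f (Suc (f z))" for z
  define N where "N = Max (succ ` {..x1})"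
  have "\<not> looks_like_omega s (order_struc (\<lambda>x y. f y \<le> f x))" if "N \<le> s" for s
  proof
    assume "looks_like_omega s (order_struc (\<lambda>x y. f y \<le> f x))"
    then obtain x where x: "x \<le> s" "least_upto s (order_struc (\<lambda>x y. f y \<le> f x)) x"
      "\<forall>z<x. \<not> greatest_upto s (order_struc (\<lambda>x y. f y \<le> f x)) z"
      unfolding looks_like_omega_def by blast
    show False
    proof (cases "x \<le> x1")
      case True
      then have "succ x \<le> s" using that unfolding N_def by (meson Max_ge atMost_iff
        finite_atMost finite_imageI image_eqI order_trans)
      with x(2) have "f (succ x) \<le> f x" unfolding least_upto_def by simp
      then show False unfolding succ_def by (simp add: f_inv)
    next
      case False
      then have "\<not> greatest_upto s (order_struc (\<lambda>x y. f y \<le> f x)) x1" using x(3) by simp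
      then show False unfolding greatest_upto_def x1_def by (simp add: f_inv)
    qed
  qed
  then show ?thesis unfolding eventually_sequentially by blast
qed

definition omega_learner :: learner where
  "omega_learner p = (if looks_like_omega (fst p) (snd p) then Some omega else Some omega_star)"

lemma omega_learner_restr:
  "omega_learner (restr s S) = (if looks_like_omega s S then Some omega else Some omega_star)"
  unfolding omega_learner_def by (simp add: looks_like_omega_restr)

lemma K_omega_Ex: "Ex_learnable [2] K_omega"
  unfolding Ex_learnable_def
proof (intro exI)
  show "Ex_learns [2] K_omega omega_learner" unfolding Ex_learns_def
  proof (intro conjI ballI)
    show "is_learner [2] K_omega omega_learner"
      unfolding is_learner_def omega_learner_def K_omega_def by auto
  next
    fix S assume "S \<in> LD [2] K_omega"
    then have "iso S omega \<or> iso S omega_star" unfolding LD_def K_omega_def by blast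
    then show "\<exists>A\<in>K_omega. iso S A \<and> (\<forall>\<^sub>F n in sequentially. omega_learner (restr n S) = Some A)"
    proof
      assume S: "iso S omega"
      then obtain f :: "nat \<Rightarrow> nat" where "bij f" "S = order_struc (\<lambda>x y. f x \<le> f y)"
        unfolding omega_def iso_order_struc_iff by blast
      then have "\<forall>\<^sub>F n in sequentially. looks_like_omega n S"
        using eventually_looks_like_omega by simp
      then have "\<forall>\<^sub>F n in sequentially. omega_learner (restr n S) = Some omega"
        by (rule eventually_mono) (simp add: omega_learner_restr)
      with S show ?thesis unfolding K_omega_def by blast
    next
      assume S: "iso S omega_star"
      then obtain f :: "nat \<Rightarrow> nat" where "bij f" "S = order_struc (\<lambda>x y. f y \<le> f x)"
        unfolding omega_star_def iso_order_struc_iff by blast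
      then have "\<forall>\<^sub>F n in sequentially. \<not> looks_like_omega n S"
        using eventually_not_looks_like_omega by simp
      then have "\<forall>\<^sub>F n in sequentially. omega_learner (restr n S) = Some omega_star"
        by (rule eventually_mono) (simp add: omega_learner_restr)
      with S show ?thesis unfolding K_omega_def by blast
    qed
  qed
qed

lemma learn_le_imp_learn_le_fin: "learn_le X Y \<Longrightarrow> learn_le_fin X Y"
  unfolding learn_le_def learn_le_fin_def by blast

lemma not_learn_le_fin_imp_not_learn_le: "\<not> learn_le_fin X Y \<Longrightarrow> \<not> learn_le X Y"
  using learn_le_imp_learn_le_fin by blast

lemma not_learn_leI:
  "family sig K \<Longrightarrow> X sig K \<Longrightarrow> \<not> Y sig K \<Longrightarrow> \<not> learn_le X Y"
  unfolding learn_le_def by blast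

lemma not_learn_le_finI:
  "family sig K \<Longrightarrow> finite K \<Longrightarrow> X sig K \<Longrightarrow> \<not> Y sig K \<Longrightarrow> \<not> learn_le_fin X Y"
  unfolding learn_le_fin_def by blast

theorem mainTheorem12:
  shows "(learn_lt co_learnable nUs_learnable \<and> learn_lt_fin co_learnable nUs_learnable)
    \<and> (learn_lt nUs_learnable Erange_learnable \<and> learn_eq_fin nUs_learnable Erange_learnable)
    \<and> (learn_lt_fin nUs_learnable Ex_learnable \<and> learn_lt nUs_learnable Ex_learnable)"
proof -
  have co_nUs: "learn_le co_learnable nUs_learnable"
    unfolding learn_le_def using co_imp_nUs by blast
  have nUs_co: "\<not> learn_le_fin nUs_learnable co_learnable"
    using not_learn_le_finI[of "[1]" K_at_most_one nUs_learnable co_learnable]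
      family_K_at_most_one K_at_most_one_nUs K_at_most_one_not_co
    by (simp add: K_at_most_one_def)
  have nUs_Er: "learn_le nUs_learnable Erange_learnable"
    unfolding learn_le_def using nUs_imp_Erange by blast
  have Er_nUs_fin: "learn_le_fin Erange_learnable nUs_learnable"
    unfolding learn_le_fin_def using Erange_fin_imp_nUs by blast
  have Er_nUs: "\<not> learn_le Erange_learnable nUs_learnable"
    using not_learn_leI[of "[1]" K_sizes Erange_learnable nUs_learnable]
      family_K_sizes K_sizes_Erange K_sizes_not_Ex nUs_imp_Ex by blast
  have nUs_Ex: "learn_le nUs_learnable Ex_learnable"
    unfolding learn_le_def using nUs_imp_Ex by blast
  have Ex_nUs: "\<not> learn_le_fin Ex_learnable nUs_learnable"
    using not_learn_le_finI[of "[2]" K_omega Ex_learnable nUs_learnable]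
      family_K_omega K_omega_Ex K_omega_not_nUs
    by (simp add: K_omega_def)
  show ?thesis
    unfolding learn_lt_def learn_lt_fin_def learn_eq_fin_def
    using co_nUs nUs_co nUs_Er Er_nUs_fin Er_nUs nUs_Ex Ex_nUs
    by (simp add: learn_le_imp_learn_le_fin not_learn_le_fin_imp_not_learn_le)
qed

end
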